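(* Suppose that $q(z)\le0$ for all $z\in[0,\infty)$ and let $\phi\in X_+$. Then for $w=w^\phi$ one has $w'(t)\le0$ for all $t\ge0$, and there exists $w^\infty=w^\infty(\phi)\in[0,\infty)$ with $w(t)\to w^\infty$ as $t\to\infty$. If moreover $$\forall\,\varepsilon>0\;\exists\,\delta>0\ \text{such that}\ j(\varphi,\psi)\le\varepsilon\ \ \forall\,(\varphi,\psi)\in U_+\ \text{with}\ \|\varphi\|_0\le\delta ,$$ then there is a zero solution, which is stable on $X_+$ in the $C$-norm and in the $C^1$-norm.
   Context: Let $h>0$, $R_-<0$, $I=(R_-,\infty)$, $q:I\to\mathbb{R}$, $\mu>0$, $U=C^1([-h,0],\mathbb{R})\times C^1([-h,0],I)$, $j:U\to\mathbb{R}$, $U_+=C^1([-h,0],\mathbb{R}_+^2)$, $\|\cdot\|_0$ the sup-norm; $x_t(s)=x(t+s)$. Consider $w'(t)=q(v(t))w(t)$, $v'(t)=j(w_t,v_t)-\mu v(t)$, $(w,v)_0=(\varphi,\psi)$. Define $F(\varphi,\psi)=(q(\psi(0))\varphi(0),\,j(\varphi,\psi)-\mu\psi(0))$ and $X_+=\{\phi\in C^1([-h,0],\mathbb{R}_+^2):\phi'(0)=F(\phi)\}\neq\emptyset$. Assume: $j$ is $C^1$ on $U$ with each derivative extending to a linear map on $C([-h,0],\mathbb{R}^2)$ depending continuously on $(\phi,\chi)$; for every bounded $B\subset U_+$ there is $L_B$ with $|j(\phi)-j(\chi)|\le L_B\|\phi-\chi\|_0$ on $B$; $j\ge0$ on $U_+$;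 $j(B_1\times B_2)$ is bounded whenever $B_1\times B_2\subset U_+$ with $B_1$ bounded; $q$ is bounded and $C^1$. Solutions from $X_+$ exist globally and remain nonnegative. *)

theory Defs
  imports "HOL-Analysis.Analysis"
begin

text \<open>Functions on [-h,0] are represented as total functions real => real; only
their values on {-h..0} matter.  Pairs in R^2 are normed by the max-norm.\<close>

definition segC1 :: "real \<Rightarrow> (real \<Rightarrow> real) \<Rightarrow> (real \<Rightarrow> real) \<Rightarrow> bool" where
  "segC1 h f f' \<longleftrightarrow> continuous_on {-h..0} f' \<and>
     (\<forall>s\<in>{-h..0}. (f has_real_derivative f' s) (at s within {-h..0}))"

definition sup1 :: "real \<Rightarrow> (real \<Rightarrow> real) \<Rightarrow> real" where
  "sup1 h f = (SUP s\<in>{-h..0}. \<bar>f s\<bar>)"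

definition sup2 :: "real \<Rightarrow> (real \<Rightarrow> real) \<Rightarrow> (real \<Rightarrow> real) \<Rightarrow> real" where
  "sup2 h f g = (SUP s\<in>{-h..0}. max \<bar>f s\<bar> \<bar>g s\<bar>)"

definition Uplus :: "real \<Rightarrow> (real \<Rightarrow> real) \<Rightarrow> (real \<Rightarrow> real) \<Rightarrow> (real \<Rightarrow> real) \<Rightarrow> (real \<Rightarrow> real) \<Rightarrow> bool" where
  "Uplus h \<phi> \<psi> \<phi>' \<psi>' \<longleftrightarrow> segC1 h \<phi> \<phi>' \<and> segC1 h \<psi> \<psi>' \<and>
     (\<forall>s\<in>{-h..0}. 0 \<le> \<phi> s \<and> 0 \<le> \<psi> s)"

definition Xplus :: "real \<Rightarrow> (real \<Rightarrow> real) \<Rightarrow> ((real \<Rightarrow> real) \<Rightarrow> (real \<Rightarrow> real) \<Rightarrow> real) \<Rightarrow> real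
     \<Rightarrow> (real \<Rightarrow> real) \<Rightarrow> (real \<Rightarrow> real) \<Rightarrow> bool" where
  "Xplus h q j \<mu> \<phi> \<psi> \<longleftrightarrow> (\<exists>\<phi>' \<psi>'. Uplus h \<phi> \<psi> \<phi>' \<psi>' \<and>
     \<phi>' 0 = q (\<psi> 0) * \<phi> 0 \<and> \<psi>' 0 = j \<phi> \<psi> - \<mu> * \<psi> 0)"

definition is_sol :: "real \<Rightarrow> real \<Rightarrow> (real \<Rightarrow> real) \<Rightarrow> ((real \<Rightarrow> real) \<Rightarrow> (real \<Rightarrow> real) \<Rightarrow> real) \<Rightarrow> real
     \<Rightarrow> (real \<Rightarrow> real) \<Rightarrow> (real \<Rightarrow> real)
     \<Rightarrow> (real \<Rightarrow> real) \<Rightarrow> (real \<Rightarrow> real) \<Rightarrow> (real \<Rightarrow> real) \<Rightarrow> (real \<Rightarrow> real) \<Rightarrow> bool" where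
  "is_sol h Rm q j \<mu> \<phi> \<psi> w v w' v' \<longleftrightarrow>
     continuous_on {-h..} w' \<and> continuous_on {-h..} v' \<and>
     (\<forall>t\<ge>-h. (w has_real_derivative w' t) (at t within {-h..}) \<and>
              (v has_real_derivative v' t) (at t within {-h..})) \<and>
     (\<forall>s\<in>{-h..0}. w s = \<phi> s \<and> v s = \<psi> s) \<and>
     (\<forall>t\<ge>-h. Rm < v t) \<and>
     (\<forall>t\<ge>0. w' t = q (v t) * w t \<and>
             v' t = j (\<lambda>s. w (t + s)) (\<lambda>s. v (t + s)) - \<mu> * v t)"

end

theory Submission
  imports Defs
begin

(* Since v \<ge> 0 and q \<le> 0 on [0,\<infinity>), w' = q(v) w \<le> 0, so the nonnegative function w
   decreases to a limit.  For the stability of zero, monotonicity bounds w(t) by the initial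
   data; by the smallness hypothesis on j this makes j(w_t, v_t) \<le> \<mu>\<eta>/2 once the initial
   data are small, so v' < 0 wherever v > \<eta> and v never crosses the level \<eta>.  The
   derivatives are then controlled by the equations: |w'| \<le> sup|q| \<eta> and |v'| \<le> j + \<mu>\<eta>. *)

lemma abs_le_sup2:
  assumes "continuous_on {-h..0} f" "continuous_on {-h..0} g" "s \<in> {-h..0}"
  shows "\<bar>f s\<bar> \<le> sup2 h f g" "\<bar>g s\<bar> \<le> sup2 h f g"
proof -
  have "compact ((\<lambda>s. max \<bar>f s\<bar> \<bar>g s\<bar>) ` {-h..0})"
    using assms(1,2) by (intro compact_continuous_image continuous_intros) auto
  then have "bdd_above ((\<lambda>s. max \<bar>f s\<bar> \<bar>g s\<bar>) ` {-h..0})"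
    by (simp add: bounded_imp_bdd_above compact_imp_bounded)
  then have "max \<bar>f s\<bar> \<bar>g s\<bar> \<le> sup2 h f g"
    unfolding sup2_def using assms(3) by (rule cSUP_upper2) simp
  then show "\<bar>f s\<bar> \<le> sup2 h f g" "\<bar>g s\<bar> \<le> sup2 h f g" by auto
qed

lemma sup2_le:
  assumes "0 \<le> h" "\<And>s. s \<in> {-h..0} \<Longrightarrow> \<bar>f s\<bar> \<le> M \<and> \<bar>g s\<bar> \<le> M"
  shows "sup2 h f g \<le> M"
  unfolding sup2_def using assms by (intro cSUP_least) auto

lemma sup1_le:
  assumes "0 \<le> h" "\<And>s. s \<in> {-h..0} \<Longrightarrow> \<bar>f s\<bar> \<le> M"
  shows "sup1 h f \<le> M"
  unfolding sup1_def using assms by (intro cSUP_least) auto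

lemma segC1_continuous_on: "segC1 h f f' \<Longrightarrow> continuous_on {-h..0} f"
  unfolding segC1_def
  by (auto simp: continuous_on_eq_continuous_within intro: DERIV_continuous)

lemma has_real_derivative_segment_shift:
  assumes "(f has_real_derivative f' (t + s)) (at (t + s) within {-h..})" "0 \<le> t"
  shows "((\<lambda>s. f (t + s)) has_real_derivative f' (t + s)) (at s within {-h..0})"
proof -
  have "(f has_real_derivative f' (t + s)) (at (t + s) within (\<lambda>s. t + s) ` {-h..0})"
    by (rule DERIV_subset[OF assms(1)]) (use assms(2) in auto)
  moreover have "((\<lambda>s. t + s) has_real_derivative 1) (at s within {-h..0})"
    by (auto intro!: derivative_eq_intros)
  ultimately show ?thesis
    using DERIV_image_chain by (fastforce simp: o_def)
qed

lemma is_sol_deriv_at: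
  assumes "is_sol h Rm q j \<mu> \<phi> \<psi> w v w' v'" "-h < t"
  shows "(w has_real_derivative w' t) (at t)" "(v has_real_derivative v' t) (at t)"
proof -
  have "at t within {-h..} = at t"
    using assms(2) by (intro at_within_interior) simp
  then show "(w has_real_derivative w' t) (at t)" "(v has_real_derivative v' t) (at t)"
    using assms unfolding is_sol_def by (metis less_imp_le)+
qed

lemma is_sol_continuous_on:
  assumes "is_sol h Rm q j \<mu> \<phi> \<psi> w v w' v'"
  shows "continuous_on {-h..} w" "continuous_on {-h..} v"
    and "continuous_on {-h..} w'" "continuous_on {-h..} v'"
  using assms unfolding is_sol_def
  by (auto simp: continuous_on_eq_continuous_within intro: DERIV_continuous)

lemma is_sol_segment_Uplus:
  assumes sol: "is_sol h Rm q j \<mu> \<phi> \<psi> w v w' v'"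
    and nonneg: "\<forall>t\<ge>-h. 0 \<le> w t \<and> 0 \<le> v t" and "0 \<le> t"
  shows "Uplus h (\<lambda>s. w (t + s)) (\<lambda>s. v (t + s)) (\<lambda>s. w' (t + s)) (\<lambda>s. v' (t + s))"
proof -
  have shift: "(\<lambda>s. t + s) ` {-h..0} \<subseteq> {-h..}" using \<open>0 \<le> t\<close> by auto
  have "continuous_on {-h..0} (\<lambda>s. w' (t + s))" "continuous_on {-h..0} (\<lambda>s. v' (t + s))"
    using is_sol_continuous_on(3,4)[OF sol]
    by (auto intro!: continuous_on_compose2[OF _ _ shift] continuous_intros)
  moreover have "((\<lambda>s. w (t + s)) has_real_derivative w' (t + s)) (at s within {-h..0})"
    "((\<lambda>s. v (t + s)) has_real_derivative v' (t + s)) (at s within {-h..0})"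
    if "s \<in> {-h..0}" for s
    using that sol \<open>0 \<le> t\<close> unfolding is_sol_def by (auto intro!: has_real_derivative_segment_shift)
  ultimately show ?thesis
    using nonneg \<open>0 \<le> t\<close> unfolding Uplus_def segC1_def by auto
qed

lemma DERIV_neg_above_stays_below:
  fixes v v' :: "real \<Rightarrow> real"
  assumes deriv: "\<And>t. 0 \<le> t \<Longrightarrow> (v has_real_derivative v' t) (at t)"
    and neg: "\<And>t. 0 \<le> t \<Longrightarrow> M < v t \<Longrightarrow> v' t < 0"
    and "v 0 \<le> M" "0 \<le> t"
  shows "v t \<le> M"
proof (rule ccontr)
  assume "\<not> v t \<le> M"
  then have above_t: "M < v t" by simp
  have cont: "continuous_on {0..t} v"
    by (intro continuous_at_imp_continuous_on ballI DERIV_isCont[OF deriv]) simp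
  define S where "S = {0..t} \<inter> v -` {..M}"
  define t0 where "t0 = Sup S"
  have "0 \<in> S" using \<open>v 0 \<le> M\<close> \<open>0 \<le> t\<close> unfolding S_def by auto
  moreover have "bdd_above S" unfolding S_def by (auto intro: bdd_aboveI[where M = t])
  moreover have "closed S"
    unfolding S_def using cont by (rule continuous_closed_preimage) auto
  ultimately have "t0 \<in> S" unfolding t0_def by (intro closed_contains_Sup) auto
  then have t0: "0 \<le> t0" "t0 \<le> t" "v t0 \<le> M" unfolding S_def by auto
  with above_t have "t0 < t" by (cases "t0 = t") auto
  have above: "M < v s" if "t0 < s" "s \<le> t" for s
  proof (rule ccontr)
    assume "\<not> M < v s"
    then have "s \<in> S" using that t0 unfolding S_def by auto
    then have "s \<le> t0" unfolding t0_def using \<open>bdd_above S\<close> by (rule cSup_upper)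
    then show False using that by simp
  qed
  \<comment> \<open>t0 is the last time before t with v \<le> M; the MVT on [t0, t] finds v' > 0 above M\<close>
  obtain l z where z: "t0 < z" "z < t" "(v has_real_derivative l) (at z)" "v t - v t0 = (t - t0) * l"
    using MVT[OF \<open>t0 < t\<close> continuous_on_subset[OF cont]] deriv t0
    by (metis atLeastatMost_subset_iff order.refl less_imp_le order.trans real_differentiable_def)
  then have "l = v' z" using deriv[of z] t0 DERIV_unique by force
  with z t0 above neg[of z] have "l < 0" by auto
  with \<open>t0 < t\<close> have "(t - t0) * l < 0" by (simp add: mult_pos_neg)
  with z(4) above_t t0 show False by linarith
qed

lemma antimono_bounded_below_converges:
  fixes f :: "real \<Rightarrow> real"
  assumes antimono: "\<And>a b. 0 \<le> a \<Longrightarrow> a \<le> b \<Longrightarrow> f b \<le> f a"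
    and lower: "\<And>t. 0 \<le> t \<Longrightarrow> c \<le> f t"
  shows "\<exists>L\<ge>c. (f \<longlongrightarrow> L) at_top"
proof (intro exI conjI)
  define L where "L = Inf (f ` {0..})"
  have "bdd_below (f ` {0..})" using lower by (intro bdd_belowI[where m = c]) auto
  then have L_le: "L \<le> f t" if "0 \<le> t" for t
    unfolding L_def using that by (intro cInf_lower) auto
  show "c \<le> L" unfolding L_def using lower by (intro cInf_greatest) auto
  show "(f \<longlongrightarrow> L) at_top"
  proof (rule order_tendstoI)
    fix a assume "a < L"
    then show "\<forall>\<^sub>F x in at_top. a < f x"
      using L_le by (intro eventually_at_top_linorderI[where c = 0]) (meson less_le_trans)
  next
    fix a assume "L < a"
    then obtain t0 where "0 \<le> t0" "f t0 < a"
      using cInf_lessD[of "f ` {0..}"] unfolding L_def by auto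
    then show "\<forall>\<^sub>F x in at_top. f x < a"
      using antimono by (intro eventually_at_top_linorderI[where c = t0]) (meson le_less_trans)
  qed
qed

locale delay_system =
  fixes h Rm \<mu> :: real and q :: "real \<Rightarrow> real"
    and j :: "(real \<Rightarrow> real) \<Rightarrow> (real \<Rightarrow> real) \<Rightarrow> real"
  assumes h_pos: "0 < h"
    and sol_nonneg: "\<And>\<phi> \<psi> w v w' v'. Xplus h q j \<mu> \<phi> \<psi> \<Longrightarrow> is_sol h Rm q j \<mu> \<phi> \<psi> w v w' v' \<Longrightarrow>
        \<forall>t\<ge>-h. 0 \<le> w t \<and> 0 \<le> v t"
    and q_nonpos: "\<And>z. 0 \<le> z \<Longrightarrow> q z \<le> 0"
begin

abbreviation solution where
  "solution \<phi> \<psi> w v w' v' \<equiv> Xplus h q j \<mu> \<phi> \<psi> \<and> is_sol h Rm q j \<mu> \<phi> \<psi> w v w' v'"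

lemma sol_w_deriv_nonpos:
  assumes "solution \<phi> \<psi> w v w' v'" "0 \<le> t"
  shows "w' t \<le> 0"
proof -
  have "w' t = q (v t) * w t" using assms unfolding is_sol_def by auto
  moreover have "0 \<le> w t" "0 \<le> v t" using sol_nonneg assms h_pos by auto
  ultimately show ?thesis using q_nonpos by (simp add: mult_nonpos_nonneg)
qed

lemma sol_w_antimono:
  assumes sol: "solution \<phi> \<psi> w v w' v'" and "0 \<le> a" "a \<le> b"
  shows "w b \<le> w a"
proof (rule deriv_nonpos_imp_antimono[where g = w and g' = w'])
  show "(w has_real_derivative w' x) (at x)" if "x \<in> {a..b}" for x
    using sol that \<open>0 \<le> a\<close> h_pos by (intro is_sol_deriv_at) auto
  show "w' x \<le> 0" if "x \<in> {a..b}" for x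
    using sol that \<open>0 \<le> a\<close> by (intro sol_w_deriv_nonpos) auto
qed fact

lemma sol_w_nonincreasing_convergent:
  "\<forall>\<phi> \<psi> w v w' v'. Xplus h q j \<mu> \<phi> \<psi> \<and> is_sol h Rm q j \<mu> \<phi> \<psi> w v w' v' \<longrightarrow>
     (\<forall>t\<ge>0. w' t \<le> 0) \<and> (\<exists>winf\<ge>0. (w \<longlongrightarrow> winf) at_top)"
proof (intro allI impI conjI)
  fix \<phi> \<psi> w v w' v' assume sol: "solution \<phi> \<psi> w v w' v'"
  show "w' t \<le> 0" if "0 \<le> t" for t using sol_w_deriv_nonpos[OF sol that] .
  show "\<exists>winf\<ge>0. (w \<longlongrightarrow> winf) at_top"
  proof (rule antimono_bounded_below_converges)
    show "w b \<le> w a" if "0 \<le> a" "a \<le> b" for a b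
      using sol_w_antimono[OF sol that] .
    show "0 \<le> w t" if "0 \<le> t" for t
      using sol_nonneg sol that h_pos by force
  qed
qed

lemma sol_w_le_initial:
  assumes "solution \<phi> \<psi> w v w' v'" "\<forall>s\<in>{-h..0}. \<phi> s \<le> d" "-h \<le> t"
  shows "w t \<le> d"
proof (cases "t \<le> 0")
  case True
  then show ?thesis using assms unfolding is_sol_def by auto
next
  case False
  then have "w t \<le> w 0" using sol_w_antimono[OF assms(1)] by simp
  also have "w 0 \<le> d" using assms h_pos unfolding is_sol_def by auto
  finally show ?thesis .
qed

end

locale delay_system_small_j = delay_system +
  assumes Rm_neg: "Rm < 0" and mu_pos: "0 < \<mu>"
    and j_nonneg: "\<And>\<phi> \<psi> \<phi>' \<psi>'. Uplus h \<phi> \<psi> \<phi>' \<psi>' \<Longrightarrow> 0 \<le> j \<phi> \<psi>"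
    and q_bdd: "\<exists>K. \<forall>z>Rm. \<bar>q z\<bar> \<le> K"
    and j_small: "\<forall>\<epsilon>>0. \<exists>\<delta>>0. \<forall>\<phi> \<psi> \<phi>' \<psi>'. Uplus h \<phi> \<psi> \<phi>' \<psi>' \<and> sup1 h \<phi> \<le> \<delta> \<longrightarrow> j \<phi> \<psi> \<le> \<epsilon>"
begin

lemma Uplus_zero: "Uplus h (\<lambda>_. 0) (\<lambda>_. 0) (\<lambda>_. 0) (\<lambda>_. 0)"
  unfolding Uplus_def segC1_def by (auto intro!: derivative_eq_intros)

lemma j_zero: "j (\<lambda>_. 0) (\<lambda>_. 0) = 0"
proof -
  have "j (\<lambda>_. 0) (\<lambda>_. 0) \<le> \<epsilon>" if "0 < \<epsilon>" for \<epsilon>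
  proof -
    obtain \<delta> where "\<delta> > 0" and \<delta>: "\<forall>\<phi> \<psi> \<phi>' \<psi>'. Uplus h \<phi> \<psi> \<phi>' \<psi>' \<and> sup1 h \<phi> \<le> \<delta> \<longrightarrow> j \<phi> \<psi> \<le> \<epsilon>"
      using j_small \<open>0 < \<epsilon>\<close> by blast
    have "sup1 h (\<lambda>_. 0) \<le> \<delta>" using \<open>\<delta> > 0\<close> h_pos by (intro sup1_le) auto
    then show ?thesis using \<delta> Uplus_zero by blast
  qed
  then show ?thesis using j_nonneg[OF Uplus_zero] by (meson dense_ge eq_iff)
qed

lemma zero_solution:
  "Xplus h q j \<mu> (\<lambda>_. 0) (\<lambda>_. 0) \<and>
   is_sol h Rm q j \<mu> (\<lambda>_. 0) (\<lambda>_. 0) (\<lambda>_. 0) (\<lambda>_. 0) (\<lambda>_. 0) (\<lambda>_. 0)"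
  unfolding Xplus_def is_sol_def using Uplus_zero j_zero Rm_neg
  by (auto intro!: derivative_eq_intros)

lemma j_segment_small:
  assumes "0 < \<epsilon>"
  obtains d where "0 < d"
    and "\<And>\<phi> \<psi> w v w' v' t. solution \<phi> \<psi> w v w' v' \<Longrightarrow> 0 \<le> t \<Longrightarrow> \<forall>\<tau>\<ge>-h. w \<tau> \<le> d \<Longrightarrow>
           j (\<lambda>s. w (t + s)) (\<lambda>s. v (t + s)) \<le> \<epsilon>"
proof -
  obtain d where "0 < d" and d: "\<forall>\<phi> \<psi> \<phi>' \<psi>'. Uplus h \<phi> \<psi> \<phi>' \<psi>' \<and> sup1 h \<phi> \<le> d \<longrightarrow> j \<phi> \<psi> \<le> \<epsilon>"
    using j_small assms by blast
  show ?thesis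
  proof (rule that[OF \<open>0 < d\<close>])
    fix \<phi> \<psi> w v w' v' and t :: real
    assume sol: "solution \<phi> \<psi> w v w' v'" and "0 \<le> t" and w_le: "\<forall>\<tau>\<ge>-h. w \<tau> \<le> d"
    have nonneg: "\<forall>\<tau>\<ge>-h. 0 \<le> w \<tau> \<and> 0 \<le> v \<tau>" using sol_nonneg sol by blast
    have "sup1 h (\<lambda>s. w (t + s)) \<le> d"
      using h_pos \<open>0 \<le> t\<close> nonneg w_le by (intro sup1_le) auto
    then show "j (\<lambda>s. w (t + s)) (\<lambda>s. v (t + s)) \<le> \<epsilon>"
      using d is_sol_segment_Uplus[OF _ nonneg \<open>0 \<le> t\<close>] sol by blast
  qed
qed

lemma sol_small_if_initial_small:
  assumes "0 < \<eta>"
  obtains \<delta> where "0 < \<delta>" "\<delta> \<le> \<eta>"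
    and "\<And>\<phi> \<psi> w v w' v' t. solution \<phi> \<psi> w v w' v' \<Longrightarrow> \<forall>s\<in>{-h..0}. \<phi> s \<le> \<delta> \<and> \<psi> s \<le> \<delta> \<Longrightarrow>
           -h \<le> t \<Longrightarrow> w t \<le> \<eta> \<and> v t \<le> \<eta>"
proof -
  obtain d where "0 < d" and j_le: "\<And>\<phi> \<psi> w v w' v' t. solution \<phi> \<psi> w v w' v' \<Longrightarrow> 0 \<le> t \<Longrightarrow>
      \<forall>\<tau>\<ge>-h. w \<tau> \<le> d \<Longrightarrow> j (\<lambda>s. w (t + s)) (\<lambda>s. v (t + s)) \<le> \<mu> * \<eta> / 2"
    using j_segment_small[of "\<mu> * \<eta> / 2"] mu_pos assms by auto
  define \<delta> where "\<delta> = min \<eta> d"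
  have "0 < \<delta>" "\<delta> \<le> \<eta>" "\<delta> \<le> d" unfolding \<delta>_def using \<open>0 < d\<close> assms by auto
  show ?thesis
  proof (rule that[OF \<open>0 < \<delta>\<close> \<open>\<delta> \<le> \<eta>\<close>])
    fix \<phi> \<psi> w v w' v' and t :: real
    assume sol: "solution \<phi> \<psi> w v w' v'" and init: "\<forall>s\<in>{-h..0}. \<phi> s \<le> \<delta> \<and> \<psi> s \<le> \<delta>"
      and "-h \<le> t"
    have w_le: "w \<tau> \<le> \<delta>" if "-h \<le> \<tau>" for \<tau>
      using sol_w_le_initial[OF sol _ that] init by blast
    have v_init: "v \<tau> \<le> \<eta>" if "\<tau> \<in> {-h..0}" for \<tau>
      using sol init that \<open>\<delta> \<le> \<eta>\<close> unfolding is_sol_def by fastforce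
    have "v \<tau> \<le> \<eta>" if "0 \<le> \<tau>" for \<tau>
    proof (rule DERIV_neg_above_stays_below[where v = v and v' = v' and M = \<eta>])
      show "(v has_real_derivative v' t) (at t)" if "0 \<le> t" for t
        using sol that h_pos by (intro is_sol_deriv_at(2)) auto
      show "v' t < 0" if "0 \<le> t" "\<eta> < v t" for t
      proof -
        have "v' t = j (\<lambda>s. w (t + s)) (\<lambda>s. v (t + s)) - \<mu> * v t"
          using sol that unfolding is_sol_def by auto
        moreover have "j (\<lambda>s. w (t + s)) (\<lambda>s. v (t + s)) \<le> \<mu> * \<eta> / 2"
          using j_le[OF sol \<open>0 \<le> t\<close>] w_le \<open>\<delta> \<le> d\<close> by force
        moreover have "\<mu> * \<eta> < \<mu> * v t" using that mu_pos by simp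
        moreover have "0 < \<mu> * \<eta>" using mu_pos assms by simp
        ultimately show ?thesis by linarith
      qed
      show "v 0 \<le> \<eta>" using v_init h_pos by simp
    qed (rule that)
    then show "w t \<le> \<eta> \<and> v t \<le> \<eta>"
      using w_le[OF \<open>-h \<le> t\<close>] \<open>\<delta> \<le> \<eta>\<close> v_init \<open>-h \<le> t\<close> by (cases "t \<le> 0") auto
  qed
qed

lemma sol_derivs_small_if_sol_small:
  assumes "0 < \<epsilon>"
  obtains \<eta> where "0 < \<eta>" "\<eta> \<le> \<epsilon>"
    and "\<And>\<phi> \<psi> w v w' v' t. solution \<phi> \<psi> w v w' v' \<Longrightarrow> \<forall>\<tau>\<ge>-h. w \<tau> \<le> \<eta> \<and> v \<tau> \<le> \<eta> \<Longrightarrow>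
           0 \<le> t \<Longrightarrow> \<bar>w' t\<bar> \<le> \<epsilon> \<and> \<bar>v' t\<bar> \<le> \<epsilon>"
proof -
  obtain K where K: "\<forall>z>Rm. \<bar>q z\<bar> \<le> K" using q_bdd by blast
  obtain d where "0 < d" and j_le: "\<And>\<phi> \<psi> w v w' v' t. solution \<phi> \<psi> w v w' v' \<Longrightarrow> 0 \<le> t \<Longrightarrow>
      \<forall>\<tau>\<ge>-h. w \<tau> \<le> d \<Longrightarrow> j (\<lambda>s. w (t + s)) (\<lambda>s. v (t + s)) \<le> \<epsilon> / 2"
    using j_segment_small[of "\<epsilon> / 2"] assms by auto
  define c where "c = 1 + \<bar>K\<bar> + \<mu>"
  define \<eta> where "\<eta> = min d (\<epsilon> / (2 * c))"
  have "0 < c" unfolding c_def using mu_pos by simp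
  then have "0 < \<eta>" "\<eta> \<le> d" unfolding \<eta>_def using \<open>0 < d\<close> assms by auto
  have "c * \<eta> \<le> c * (\<epsilon> / (2 * c))"
    using \<open>0 < c\<close> by (intro mult_left_mono) (auto simp: \<eta>_def)
  also have "\<dots> = \<epsilon> / 2" using \<open>0 < c\<close> by simp
  finally have "\<eta> + \<bar>K\<bar> * \<eta> + \<mu> * \<eta> \<le> \<epsilon> / 2"
    unfolding c_def by (simp add: algebra_simps)
  moreover have "0 \<le> \<bar>K\<bar> * \<eta>" "0 \<le> \<mu> * \<eta>" using \<open>0 < \<eta>\<close> mu_pos by auto
  ultimately have "\<eta> \<le> \<epsilon>" "\<bar>K\<bar> * \<eta> \<le> \<epsilon>" "\<mu> * \<eta> \<le> \<epsilon> / 2"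
    using \<open>0 < \<eta>\<close> by linarith+
  show ?thesis
  proof (rule that[OF \<open>0 < \<eta>\<close> \<open>\<eta> \<le> \<epsilon>\<close>])
    fix \<phi> \<psi> w v w' v' and t :: real
    assume sol: "solution \<phi> \<psi> w v w' v'" and small: "\<forall>\<tau>\<ge>-h. w \<tau> \<le> \<eta> \<and> v \<tau> \<le> \<eta>"
      and "0 \<le> t"
    have eqs: "w' t = q (v t) * w t" "v' t = j (\<lambda>s. w (t + s)) (\<lambda>s. v (t + s)) - \<mu> * v t"
      using sol \<open>0 \<le> t\<close> unfolding is_sol_def by auto
    have nonneg: "\<forall>\<tau>\<ge>-h. 0 \<le> w \<tau> \<and> 0 \<le> v \<tau>" using sol_nonneg sol by blast
    then have wv: "0 \<le> w t" "w t \<le> \<eta>" "0 \<le> v t" "v t \<le> \<eta>"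
      using small \<open>0 \<le> t\<close> h_pos by auto
    have "Rm < v t" using wv Rm_neg by linarith
    then have "\<bar>q (v t)\<bar> \<le> \<bar>K\<bar>" using K by fastforce
    then have "\<bar>w' t\<bar> \<le> \<bar>K\<bar> * \<eta>"
      using eqs wv by (simp add: abs_mult mult_mono)
    moreover have "0 \<le> j (\<lambda>s. w (t + s)) (\<lambda>s. v (t + s))"
      using j_nonneg is_sol_segment_Uplus[OF _ nonneg \<open>0 \<le> t\<close>] sol by blast
    moreover have "j (\<lambda>s. w (t + s)) (\<lambda>s. v (t + s)) \<le> \<epsilon> / 2"
      using j_le[OF sol \<open>0 \<le> t\<close>] small \<open>\<eta> \<le> d\<close> by force
    moreover have "0 \<le> \<mu> * v t" "\<mu> * v t \<le> \<mu> * \<eta>" using wv mu_pos by auto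
    ultimately show "\<bar>w' t\<bar> \<le> \<epsilon> \<and> \<bar>v' t\<bar> \<le> \<epsilon>"
      using eqs \<open>\<bar>K\<bar> * \<eta> \<le> \<epsilon>\<close> \<open>\<mu> * \<eta> \<le> \<epsilon> / 2\<close> assms by linarith
  qed
qed

lemma zero_stable_C0:
  "\<forall>\<epsilon>>0. \<exists>\<delta>>0. \<forall>\<phi> \<psi> w v w' v'. Xplus h q j \<mu> \<phi> \<psi> \<and> is_sol h Rm q j \<mu> \<phi> \<psi> w v w' v' \<and> sup2 h \<phi> \<psi> < \<delta> \<longrightarrow>
     (\<forall>t\<ge>0. sup2 h (\<lambda>s. w (t + s)) (\<lambda>s. v (t + s)) < \<epsilon>)"
proof (intro allI impI)
  fix \<epsilon> :: real assume "0 < \<epsilon>"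
  then have "0 < \<epsilon> / 2" by simp
  obtain \<delta> where "0 < \<delta>" "\<delta> \<le> \<epsilon> / 2"
    and bound: "\<And>\<phi> \<psi> w v w' v' t. solution \<phi> \<psi> w v w' v' \<Longrightarrow> \<forall>s\<in>{-h..0}. \<phi> s \<le> \<delta> \<and> \<psi> s \<le> \<delta> \<Longrightarrow>
      -h \<le> t \<Longrightarrow> w t \<le> \<epsilon> / 2 \<and> v t \<le> \<epsilon> / 2"
    using sol_small_if_initial_small[OF \<open>0 < \<epsilon> / 2\<close>] by blast
  show "\<exists>\<delta>>0. \<forall>\<phi> \<psi> w v w' v'. Xplus h q j \<mu> \<phi> \<psi> \<and> is_sol h Rm q j \<mu> \<phi> \<psi> w v w' v' \<and> sup2 h \<phi> \<psi> < \<delta> \<longrightarrow>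
     (\<forall>t\<ge>0. sup2 h (\<lambda>s. w (t + s)) (\<lambda>s. v (t + s)) < \<epsilon>)"
  proof (intro exI[of _ \<delta>] conjI \<open>0 < \<delta>\<close> allI impI)
    fix \<phi> \<psi> w v w' v' and t :: real
    assume "Xplus h q j \<mu> \<phi> \<psi> \<and> is_sol h Rm q j \<mu> \<phi> \<psi> w v w' v' \<and> sup2 h \<phi> \<psi> < \<delta>" and "0 \<le> t"
    then have sol: "solution \<phi> \<psi> w v w' v'" and "sup2 h \<phi> \<psi> < \<delta>" by auto
    obtain \<phi>' \<psi>' where "Uplus h \<phi> \<psi> \<phi>' \<psi>'" using sol unfolding Xplus_def by blast
    then have "continuous_on {-h..0} \<phi>" "continuous_on {-h..0} \<psi>"
      unfolding Uplus_def by (auto intro: segC1_continuous_on)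
    then have "\<forall>s\<in>{-h..0}. \<phi> s \<le> \<delta> \<and> \<psi> s \<le> \<delta>"
      using abs_le_sup2 \<open>sup2 h \<phi> \<psi> < \<delta>\<close> by fastforce
    then have "\<forall>\<tau>\<ge>-h. \<bar>w \<tau>\<bar> \<le> \<epsilon> / 2 \<and> \<bar>v \<tau>\<bar> \<le> \<epsilon> / 2"
      using bound[OF sol] sol_nonneg sol by fastforce
    then have "sup2 h (\<lambda>s. w (t + s)) (\<lambda>s. v (t + s)) \<le> \<epsilon> / 2"
      using h_pos \<open>0 \<le> t\<close> by (intro sup2_le) auto
    then show "sup2 h (\<lambda>s. w (t + s)) (\<lambda>s. v (t + s)) < \<epsilon>" using \<open>0 < \<epsilon>\<close> by simp
  qed
qed

lemma zero_stable_C1: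
  "\<forall>\<epsilon>>0. \<exists>\<delta>>0. \<forall>\<phi> \<psi> w v w' v'.
     Xplus h q j \<mu> \<phi> \<psi> \<and> is_sol h Rm q j \<mu> \<phi> \<psi> w v w' v' \<and> sup2 h w v + sup2 h w' v' < \<delta> \<longrightarrow>
     (\<forall>t\<ge>0. sup2 h (\<lambda>s. w (t + s)) (\<lambda>s. v (t + s))
            + sup2 h (\<lambda>s. w' (t + s)) (\<lambda>s. v' (t + s)) < \<epsilon>)"
proof (intro allI impI)
  fix \<epsilon> :: real assume "0 < \<epsilon>"
  then have "0 < \<epsilon> / 4" by simp
  obtain \<eta> where "0 < \<eta>" "\<eta> \<le> \<epsilon> / 4"
    and deriv_bound: "\<And>\<phi> \<psi> w v w' v' t. solution \<phi> \<psi> w v w' v' \<Longrightarrow> \<forall>\<tau>\<ge>-h. w \<tau> \<le> \<eta> \<and> v \<tau> \<le> \<eta> \<Longrightarrow>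
      0 \<le> t \<Longrightarrow> \<bar>w' t\<bar> \<le> \<epsilon> / 4 \<and> \<bar>v' t\<bar> \<le> \<epsilon> / 4"
    using sol_derivs_small_if_sol_small[OF \<open>0 < \<epsilon> / 4\<close>] by blast
  obtain \<delta> where "0 < \<delta>" "\<delta> \<le> \<eta>"
    and bound: "\<And>\<phi> \<psi> w v w' v' t. solution \<phi> \<psi> w v w' v' \<Longrightarrow> \<forall>s\<in>{-h..0}. \<phi> s \<le> \<delta> \<and> \<psi> s \<le> \<delta> \<Longrightarrow>
      -h \<le> t \<Longrightarrow> w t \<le> \<eta> \<and> v t \<le> \<eta>"
    using sol_small_if_initial_small[OF \<open>0 < \<eta>\<close>] by blast
  show "\<exists>\<delta>>0. \<forall>\<phi> \<psi> w v w' v'.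
     Xplus h q j \<mu> \<phi> \<psi> \<and> is_sol h Rm q j \<mu> \<phi> \<psi> w v w' v' \<and> sup2 h w v + sup2 h w' v' < \<delta> \<longrightarrow>
     (\<forall>t\<ge>0. sup2 h (\<lambda>s. w (t + s)) (\<lambda>s. v (t + s))
            + sup2 h (\<lambda>s. w' (t + s)) (\<lambda>s. v' (t + s)) < \<epsilon>)"
  proof (intro exI[of _ \<delta>] conjI \<open>0 < \<delta>\<close> allI impI)
    fix \<phi> \<psi> w v w' v' and t :: real
    assume "Xplus h q j \<mu> \<phi> \<psi> \<and> is_sol h Rm q j \<mu> \<phi> \<psi> w v w' v' \<and> sup2 h w v + sup2 h w' v' < \<delta>" and "0 \<le> t"
    then have sol: "solution \<phi> \<psi> w v w' v'" and sup_lt: "sup2 h w v + sup2 h w' v' < \<delta>" by auto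
    have cont: "continuous_on {-h..0} w" "continuous_on {-h..0} v"
      "continuous_on {-h..0} w'" "continuous_on {-h..0} v'"
      using is_sol_continuous_on[of h Rm q j \<mu> \<phi> \<psi> w v w' v'] sol
      by (auto intro: continuous_on_subset)
    have "0 \<le> sup2 h w v" "0 \<le> sup2 h w' v'"
      using abs_le_sup2(1)[OF cont(1,2), of 0] abs_le_sup2(1)[OF cont(3,4), of 0] h_pos by auto
    then have "sup2 h w v < \<delta>" "sup2 h w' v' < \<delta>" using sup_lt by auto
    have "\<forall>s\<in>{-h..0}. \<phi> s \<le> \<delta> \<and> \<psi> s \<le> \<delta>"
      using abs_le_sup2[OF cont(1,2)] \<open>sup2 h w v < \<delta>\<close> sol
      unfolding is_sol_def by (metis abs_ge_self order.trans less_imp_le)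
    then have wv_small: "\<forall>\<tau>\<ge>-h. w \<tau> \<le> \<eta> \<and> v \<tau> \<le> \<eta>" using bound[OF sol] by blast
    then have "\<forall>\<tau>\<ge>-h. \<bar>w \<tau>\<bar> \<le> \<epsilon> / 4 \<and> \<bar>v \<tau>\<bar> \<le> \<epsilon> / 4"
      using sol_nonneg sol \<open>\<eta> \<le> \<epsilon> / 4\<close> by fastforce
    then have "sup2 h (\<lambda>s. w (t + s)) (\<lambda>s. v (t + s)) \<le> \<epsilon> / 4"
      using h_pos \<open>0 \<le> t\<close> by (intro sup2_le) auto
    moreover have "\<bar>w' \<tau>\<bar> \<le> \<epsilon> / 4 \<and> \<bar>v' \<tau>\<bar> \<le> \<epsilon> / 4" if "-h \<le> \<tau>" for \<tau>
    proof (cases "0 \<le> \<tau>")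
      case True
      then show ?thesis using deriv_bound[OF sol wv_small] by blast
    next
      case False
      then have "\<bar>w' \<tau>\<bar> \<le> sup2 h w' v'" "\<bar>v' \<tau>\<bar> \<le> sup2 h w' v'"
        using abs_le_sup2[OF cont(3,4)] that by auto
      then show ?thesis using \<open>sup2 h w' v' < \<delta>\<close> \<open>\<delta> \<le> \<eta>\<close> \<open>\<eta> \<le> \<epsilon> / 4\<close> by linarith
    qed
    then have "sup2 h (\<lambda>s. w' (t + s)) (\<lambda>s. v' (t + s)) \<le> \<epsilon> / 4"
      using h_pos \<open>0 \<le> t\<close> by (intro sup2_le) auto
    ultimately show "sup2 h (\<lambda>s. w (t + s)) (\<lambda>s. v (t + s))
            + sup2 h (\<lambda>s. w' (t + s)) (\<lambda>s. v' (t + s)) < \<epsilon>"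
      using \<open>0 < \<epsilon>\<close> by linarith
  qed
qed

end

theorem lemma10:
  fixes h Rm \<mu> :: real and q :: "real \<Rightarrow> real"
    and j :: "(real \<Rightarrow> real) \<Rightarrow> (real \<Rightarrow> real) \<Rightarrow> real"
  assumes h_pos: "0 < h" and Rm_neg: "Rm < 0" and mu_pos: "0 < \<mu>"
    and j_seg: "\<And>\<phi> \<psi> \<phi>2 \<psi>2. (\<forall>s\<in>{-h..0}. \<phi> s = \<phi>2 s \<and> \<psi> s = \<psi>2 s) \<Longrightarrow> j \<phi> \<psi> = j \<phi>2 \<psi>2"
    and j_lip: "\<And>M. \<exists>L. \<forall>\<phi> \<psi> \<phi>' \<psi>' \<alpha> \<beta> \<alpha>' \<beta>'.
        Uplus h \<phi> \<psi> \<phi>' \<psi>' \<and> sup2 h \<phi> \<psi> + sup2 h \<phi>' \<psi>' \<le> M \<and>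
        Uplus h \<alpha> \<beta> \<alpha>' \<beta>' \<and> sup2 h \<alpha> \<beta> + sup2 h \<alpha>' \<beta>' \<le> M \<longrightarrow>
        \<bar>j \<phi> \<psi> - j \<alpha> \<beta>\<bar> \<le> L * sup2 h (\<lambda>s. \<phi> s - \<alpha> s) (\<lambda>s. \<psi> s - \<beta> s)"
    and j_nonneg: "\<And>\<phi> \<psi> \<phi>' \<psi>'. Uplus h \<phi> \<psi> \<phi>' \<psi>' \<Longrightarrow> 0 \<le> j \<phi> \<psi>"
    and j_bdd: "\<And>M. \<exists>K. \<forall>\<phi> \<psi> \<phi>' \<psi>'.
        Uplus h \<phi> \<psi> \<phi>' \<psi>' \<and> sup1 h \<phi> + sup1 h \<phi>' \<le> M \<longrightarrow> \<bar>j \<phi> \<psi>\<bar> \<le> K"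
    and q_bdd: "\<exists>K. \<forall>z>Rm. \<bar>q z\<bar> \<le> K"
    and q_C1: "\<exists>q'. continuous_on {Rm<..} q' \<and> (\<forall>z>Rm. (q has_real_derivative q' z) (at z))"
    and X_ne: "\<exists>\<phi> \<psi>. Xplus h q j \<mu> \<phi> \<psi>"
    and glob_ex: "\<And>\<phi> \<psi>. Xplus h q j \<mu> \<phi> \<psi> \<Longrightarrow> \<exists>w v w' v'. is_sol h Rm q j \<mu> \<phi> \<psi> w v w' v'"
    and nonneg: "\<And>\<phi> \<psi> w v w' v'. Xplus h q j \<mu> \<phi> \<psi> \<Longrightarrow> is_sol h Rm q j \<mu> \<phi> \<psi> w v w' v' \<Longrightarrow>
        \<forall>t\<ge>-h. 0 \<le> w t \<and> 0 \<le> v t"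
    and q_nonpos: "\<And>z. 0 \<le> z \<Longrightarrow> q z \<le> 0"
  shows "(\<forall>\<phi> \<psi> w v w' v'. Xplus h q j \<mu> \<phi> \<psi> \<and> is_sol h Rm q j \<mu> \<phi> \<psi> w v w' v' \<longrightarrow>
            (\<forall>t\<ge>0. w' t \<le> 0) \<and> (\<exists>winf\<ge>0. (w \<longlongrightarrow> winf) at_top))
       \<and> ((\<forall>\<epsilon>>0. \<exists>\<delta>>0. \<forall>\<phi> \<psi> \<phi>' \<psi>'. Uplus h \<phi> \<psi> \<phi>' \<psi>' \<and> sup1 h \<phi> \<le> \<delta> \<longrightarrow> j \<phi> \<psi> \<le> \<epsilon>)
          \<longrightarrow>
          (Xplus h q j \<mu> (\<lambda>_. 0) (\<lambda>_. 0) \<and>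
           is_sol h Rm q j \<mu> (\<lambda>_. 0) (\<lambda>_. 0) (\<lambda>_. 0) (\<lambda>_. 0) (\<lambda>_. 0) (\<lambda>_. 0)) \<and>
          (\<forall>\<epsilon>>0. \<exists>\<delta>>0. \<forall>\<phi> \<psi> w v w' v'.
              Xplus h q j \<mu> \<phi> \<psi> \<and> is_sol h Rm q j \<mu> \<phi> \<psi> w v w' v' \<and> sup2 h \<phi> \<psi> < \<delta> \<longrightarrow>
              (\<forall>t\<ge>0. sup2 h (\<lambda>s. w (t + s)) (\<lambda>s. v (t + s)) < \<epsilon>)) \<and>
          (\<forall>\<epsilon>>0. \<exists>\<delta>>0. \<forall>\<phi> \<psi> w v w' v'.
              Xplus h q j \<mu> \<phi> \<psi> \<and> is_sol h Rm q j \<mu> \<phi> \<psi> w v w' v' \<and>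
              sup2 h w v + sup2 h w' v' < \<delta> \<longrightarrow>
              (\<forall>t\<ge>0. sup2 h (\<lambda>s. w (t + s)) (\<lambda>s. v (t + s))
                     + sup2 h (\<lambda>s. w' (t + s)) (\<lambda>s. v' (t + s)) < \<epsilon>)))"
proof -
  interpret delay_system h Rm \<mu> q j
    using h_pos nonneg q_nonpos by unfold_locales
  have small_j: "delay_system_small_j h Rm \<mu> q j"
    if "\<forall>\<epsilon>>0. \<exists>\<delta>>0. \<forall>\<phi> \<psi> \<phi>' \<psi>'. Uplus h \<phi> \<psi> \<phi>' \<psi>' \<and> sup1 h \<phi> \<le> \<delta> \<longrightarrow> j \<phi> \<psi> \<le> \<epsilon>"
    using that Rm_neg mu_pos j_nonneg q_bdd by unfold_locales
  show ?thesis
    using sol_w_nonincreasing_convergent small_j[THEN delay_system_small_j.zero_solution]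
      small_j[THEN delay_system_small_j.zero_stable_C0]
      small_j[THEN delay_system_small_j.zero_stable_C1]
    by blast
qed

end
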